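(* Let $n\ge2$, $p>n$, and let $A$ satisfy: (i) $A\in C([0,+\infty))$; (ii) $\delta\le A\le L$ for positive constants $\delta,L$; (iii) $t\mapsto t^{p-1}A(t)$ is strictly increasing for $t>0$. Let $x_0\in\mathbb{R}^n$, $R>0$, and $f\in L^\infty(B_R(x_0))$. Then there exists a family $\{v_{a,x_0}\}_{a\ge0}$ of functions, radially symmetric with respect to $x_0$, each of which is a weak supersolution of $-\mathrm{div}(|\nabla v|^{p-2}A(|\nabla v|)\nabla v)=f$ in $B_R(x_0)\setminus\{x_0\}$, such that for every $a\ge0$ and $x\in B_R(x_0)$, $$\Big(\frac{1}{L}\Big)^{\frac{1}{p-1}}a\,\frac{|x-x_0|^{\alpha}}{\alpha}\le v_{a,x_0}(x)\le\Big(\frac{1}{\delta}\Big)^{\frac{1}{p-1}}\left(a+\Big(\frac{R^n\|f\|_\infty}{n}\Big)^{\frac{1}{p-1}}\right)\frac{|x-x_0|^{\alpha}}{\alpha},$$ where $\alpha=\frac{p-n}{p-1}$ and $\|f\|_\infty$ is the $L^\infty(B_R(x_0))$ norm of $f$.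
   Context: A function $v\in W^{1,p}_{loc}(\Omega)$ is a weak supersolution of $-\mathrm{div}(|\nabla v|^{p-2}A(|\nabla v|)\nabla v)=f$ in an open set $\Omega$ if $\int_\Omega |\nabla v|^{p-2}A(|\nabla v|)\nabla v\cdot\nabla\eta\,dx\ge\int_\Omega f\eta\,dx$ for all nonnegative $\eta\in C_0^\infty(\Omega)$. *)

theory Defs
  imports "HOL-Analysis.Analysis"
begin

coinductive smooth_fun :: "('a::euclidean_space \<Rightarrow> real) \<Rightarrow> bool" where
  "(\<forall>x. \<phi> differentiable (at x)) \<Longrightarrow>
   (\<forall>b\<in>Basis. smooth_fun (\<lambda>x. frechet_derivative \<phi> (at x) b)) \<Longrightarrow> smooth_fun \<phi>"

definition grad :: "('a::euclidean_space \<Rightarrow> real) \<Rightarrow> 'a \<Rightarrow> 'a" where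
  "grad \<phi> x = (\<Sum>b\<in>Basis. frechet_derivative \<phi> (at x) b *\<^sub>R b)"

definition test_fun :: "'a::euclidean_space set \<Rightarrow> ('a \<Rightarrow> real) \<Rightarrow> bool" where
  "test_fun \<Omega> \<phi> \<longleftrightarrow> smooth_fun \<phi> \<and> compact (closure {x. \<phi> x \<noteq> 0})
      \<and> closure {x. \<phi> x \<noteq> 0} \<subseteq> \<Omega>"

definition Lp_loc :: "real \<Rightarrow> 'a::euclidean_space set \<Rightarrow> ('a \<Rightarrow> 'b::euclidean_space) \<Rightarrow> bool" where
  "Lp_loc p \<Omega> u \<longleftrightarrow> (\<forall>K. compact K \<and> K \<subseteq> \<Omega> \<longrightarrow>
      set_borel_measurable lebesgue K u \<and> set_integrable lebesgue K (\<lambda>x. norm (u x) powr p))"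

definition weak_gradient :: "'a::euclidean_space set \<Rightarrow> ('a \<Rightarrow> real) \<Rightarrow> ('a \<Rightarrow> 'a) \<Rightarrow> bool" where
  "weak_gradient \<Omega> v g \<longleftrightarrow> Lp_loc 1 \<Omega> v \<and> Lp_loc 1 \<Omega> g \<and>
     (\<forall>\<phi>. test_fun \<Omega> \<phi> \<longrightarrow> (\<forall>i\<in>Basis.
        (LINT x:\<Omega>|lebesgue. v x * frechet_derivative \<phi> (at x) i)
          = - (LINT x:\<Omega>|lebesgue. (g x \<bullet> i) * \<phi> x)))"

definition weak_supersolution ::
  "real \<Rightarrow> (real \<Rightarrow> real) \<Rightarrow> ('a::euclidean_space \<Rightarrow> real) \<Rightarrow> 'a set \<Rightarrow> ('a \<Rightarrow> real) \<Rightarrow> bool" where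
  "weak_supersolution p A f \<Omega> v \<longleftrightarrow> (\<exists>g. weak_gradient \<Omega> v g \<and> Lp_loc p \<Omega> v \<and> Lp_loc p \<Omega> g \<and>
     (\<forall>\<eta>. test_fun \<Omega> \<eta> \<and> (\<forall>x. \<eta> x \<ge> 0) \<longrightarrow>
        set_integrable lebesgue \<Omega> (\<lambda>x. norm (g x) powr (p - 2) * A (norm (g x)) * (g x \<bullet> grad \<eta> x)) \<and>
        set_integrable lebesgue \<Omega> (\<lambda>x. f x * \<eta> x) \<and>
        (LINT x:\<Omega>|lebesgue. norm (g x) powr (p - 2) * A (norm (g x)) * (g x \<bullet> grad \<eta> x))
          \<ge> (LINT x:\<Omega>|lebesgue. f x * \<eta> x)))"

definition Linf_on :: "'a::euclidean_space set \<Rightarrow> ('a \<Rightarrow> real) \<Rightarrow> bool" where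
  "Linf_on S f \<longleftrightarrow> set_borel_measurable lebesgue S f \<and>
     (\<exists>C. AE x in lebesgue. x \<in> S \<longrightarrow> \<bar>f x\<bar> \<le> C)"

definition Linf_norm :: "'a::euclidean_space set \<Rightarrow> ('a \<Rightarrow> real) \<Rightarrow> real" where
  "Linf_norm S f = Inf {C. C \<ge> 0 \<and> (AE x in lebesgue. x \<in> S \<longrightarrow> \<bar>f x\<bar> \<le> C)}"

end

theory Submission
  imports Defs
begin

text \<open>
  With phi(t) = t^(p-1) A(t) and M the L^\<infinity> norm of f, the barrier is
  v(x) = \<integral> w(r) dr over [0, |x - x0|], where the slope w solves
  phi(w(r)) r^(n-1) = a^(p-1) + M (R^n - r^n) / n.
  Its flux |Dv|^(p-2) A(|Dv|) Dv = phi(w(r)) / r (x - x0) is then the radial field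
  ((a^(p-1) + M R^n / n) r^(-n) - M / n) (x - x0), whose divergence is the constant -M \<le> -f;
  integrating by parts against nonnegative test functions gives the supersolution inequality.
  The growth bounds \<delta> t^(p-1) \<le> phi(t) \<le> L t^(p-1) pin w(r) between multiples of
  r^((1-n)/(p-1)), and integrating from 0 to |x - x0| gives the two-sided estimate; the upper
  constant is simplified by (s + t)^(1/q) \<le> s^(1/q) + t^(1/q) for q = p - 1 \<ge> 1.
\<close>

section \<open>Integrals of compactly supported functions\<close>

lemma integrable_lborel_compact_support:
  fixes f :: "'a::euclidean_space \<Rightarrow> real"
  assumes "continuous_on UNIV f" "compact S" "\<And>x. x \<notin> S \<Longrightarrow> f x = 0"
  shows "integrable lborel f"
proof -
  have "integrable lborel (\<lambda>x. indicator S x *\<^sub>R f x)"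
    by (rule borel_integrable_compact[OF assms(2) continuous_on_subset[OF assms(1)]]) simp
  also have "(\<lambda>x. indicator S x *\<^sub>R f x) = f"
    using assms(3) by (auto simp: indicator_def fun_eq_iff)
  finally show ?thesis .
qed

lemma set_integral_compact_support:
  fixes f :: "'a::euclidean_space \<Rightarrow> real"
  assumes "continuous_on UNIV f" "compact S" "S \<subseteq> \<Omega>" "\<And>x. x \<notin> S \<Longrightarrow> f x = 0"
  shows "set_integrable lebesgue \<Omega> f" and "(LINT x:\<Omega>|lebesgue. f x) = integral\<^sup>L lborel f"
proof -
  have f: "f \<in> borel_measurable lborel"
    using assms(1) by (simp add: borel_measurable_continuous_onI)
  have restrict: "(\<lambda>x. indicator \<Omega> x *\<^sub>R f x) = f"
    using assms(3,4) by (auto simp: fun_eq_iff indicator_def)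
  show "set_integrable lebesgue \<Omega> f"
    unfolding set_integrable_def restrict integrable_completion[OF f]
    by (rule integrable_lborel_compact_support[OF assms(1,2,4)])
  show "(LINT x:\<Omega>|lebesgue. f x) = integral\<^sup>L lborel f"
    unfolding set_lebesgue_integral_def restrict integral_completion[OF f] ..
qed

lemma integral_lborel_translate:
  fixes f :: "'a::euclidean_space \<Rightarrow> real"
  assumes "f \<in> borel_measurable borel"
  shows "integral\<^sup>L lborel (\<lambda>x. f (c + x)) = integral\<^sup>L lborel f"
  using integral_distr[of "(+) c" lborel borel f] assms by (simp add: lborel_distr_plus)

lemma integrable_lborel_translate:
  fixes f :: "'a::euclidean_space \<Rightarrow> real"
  assumes "f \<in> borel_measurable borel"
  shows "integrable lborel (\<lambda>x. f (c + x)) \<longleftrightarrow> integrable lborel f"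
  using integrable_distr_eq[of "(+) c" lborel borel f] assms by (simp add: lborel_distr_plus)

lemma integral_difference_quotient_eq_0:
  fixes u :: "'a::euclidean_space \<Rightarrow> real"
  assumes u: "integrable lborel u"
  shows "integral\<^sup>L lborel (\<lambda>x. (u (x + t *\<^sub>R i) - u x) / t) = 0"
proof -
  have u_meas: "u \<in> borel_measurable borel"
    using borel_measurable_integrable[OF u] by simp
  have shifted: "integrable lborel (\<lambda>x. u (t *\<^sub>R i + x))"
    using u by (simp add: integrable_lborel_translate[OF u_meas])
  have "integral\<^sup>L lborel (\<lambda>x. (u (x + t *\<^sub>R i) - u x) / t)
      = (integral\<^sup>L lborel (\<lambda>x. u (t *\<^sub>R i + x)) - integral\<^sup>L lborel u) / t"
    using shifted u by (simp add: add.commute)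
  also have "\<dots> = 0"
    by (simp add: integral_lborel_translate[OF u_meas])
  finally show ?thesis .
qed

lemma has_real_derivative_along_line:
  assumes "(u has_derivative D) (at (x + t *\<^sub>R i))"
  shows "((\<lambda>t. u (x + t *\<^sub>R i)) has_real_derivative D i) (at t)"
proof -
  have "((\<lambda>t. x + t *\<^sub>R i) has_derivative (\<lambda>s. s *\<^sub>R i)) (at t)"
    by (auto intro!: derivative_eq_intros)
  from has_derivative_compose[OF this assms]
  have "((\<lambda>t. u (x + t *\<^sub>R i)) has_derivative (\<lambda>s. D (s *\<^sub>R i))) (at t)" .
  moreover have "(\<lambda>s. D (s *\<^sub>R i)) = (*) (D i)"
    using linear_scale[OF has_derivative_linear[OF assms]] by (auto simp: fun_eq_iff)
  ultimately show ?thesis by (simp add: has_field_derivative_def)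
qed

lemma bounded_range_compact_support:
  fixes f :: "'a::euclidean_space \<Rightarrow> real"
  assumes "continuous_on UNIV f" "compact S" "\<And>x. x \<notin> S \<Longrightarrow> f x = 0"
  shows "bounded (range f)"
proof -
  have "bounded (f ` S)"
    using assms(1,2) by (intro compact_imp_bounded compact_continuous_image) (auto intro: continuous_on_subset)
  moreover have "range f \<subseteq> insert 0 (f ` S)"
    using assms(3) by auto
  ultimately show ?thesis
    by (metis bounded_insert bounded_subset)
qed

lemma abs_difference_quotient_le:
  fixes g g' :: "real \<Rightarrow> real"
  assumes "\<And>t. (g has_real_derivative g' t) (at t)" "\<And>t. \<bar>g' t\<bar> \<le> B" "0 < h"
  shows "\<bar>(g h - g 0) / h\<bar> \<le> B"
proof -
  obtain z where "g h - g 0 = (h - 0) * g' z"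
    using MVT2[of 0 h g g'] assms(1,3) by blast
  then show ?thesis
    using assms(2)[of z] assms(3) by simp
qed

lemma difference_quotient_LIMSEQ:
  fixes g :: "real \<Rightarrow> real"
  assumes "(g has_real_derivative d) (at 0)"
  shows "(\<lambda>k. (g (1 / Suc k) - g 0) / (1 / Suc k)) \<longlonglongrightarrow> d"
proof -
  have "((\<lambda>t. (g t - g 0) / t) \<longlongrightarrow> d) (at 0)"
    using assms unfolding has_field_derivative_iff by simp
  moreover have "filterlim (\<lambda>k. 1 / real (Suc k)) (at 0) sequentially"
    using LIMSEQ_Suc[OF lim_inverse_n'] by (intro filterlim_atI) auto
  ultimately show ?thesis
    by (rule filterlim_compose)
qed

text \<open>The difference quotients in direction \<open>i\<close> have integral zero by translation invariance
  of Lebesgue measure, and they converge to \<open>du\<close> under a bound by a multiple of an indicator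
  function.\<close>

lemma integral_partial_derivative_compact_support:
  fixes u du :: "'a::euclidean_space \<Rightarrow> real"
  assumes S: "compact S" and u0: "\<And>x. x \<notin> S \<Longrightarrow> u x = 0" and du0: "\<And>x. x \<notin> S \<Longrightarrow> du x = 0"
    and du_cont: "continuous_on UNIV du"
    and u_deriv: "\<And>y. (u has_derivative D y) (at y)" and D_i: "\<And>y. D y i = du y"
  shows "integral\<^sup>L lborel du = 0"
proof -
  have u_cont: "continuous_on UNIV u"
    using u_deriv has_derivative_continuous by (meson continuous_at_imp_continuous_on)
  obtain B where B: "\<And>x. \<bar>du x\<bar> \<le> B"
    using bounded_range_compact_support[OF du_cont S du0] by (auto simp: bounded_iff)
  obtain r where r: "\<forall>x\<in>S. norm x \<le> r"
    using compact_imp_bounded[OF S] bounded_iff by blast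
  define K where "K = cball (0::'a) (r + norm i)"
  define h :: "nat \<Rightarrow> real" where "h k = 1 / Suc k" for k
  define s where "s k x = (u (x + h k *\<^sub>R i) - u x) / h k" for k x
  have h: "0 < h k" "h k \<le> 1" for k
    by (auto simp: h_def field_simps)
  have line: "((\<lambda>t. u (x + t *\<^sub>R i)) has_real_derivative du (x + t *\<^sub>R i)) (at t)" for x t
    using has_real_derivative_along_line[OF u_deriv[of "x + t *\<^sub>R i"]] by (simp only: D_i)
  have s_bound: "\<bar>s k x\<bar> \<le> indicator K x * B" for k x
  proof (cases "x \<in> K")
    case True
    then show ?thesis
      using abs_difference_quotient_le[OF line B h(1)] by (simp add: s_def)
  next
    case False
    then have far: "r + norm i < norm x"
      by (simp add: K_def)
    have "norm x \<le> norm (x + h k *\<^sub>R i) + h k * norm i"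
      using norm_triangle_ineq4[of "x + h k *\<^sub>R i" "h k *\<^sub>R i"] h[of k] by simp
    moreover have "h k * norm i \<le> norm i"
      using h[of k] by (simp add: mult_left_le_one_le)
    ultimately have "x \<notin> S" "x + h k *\<^sub>R i \<notin> S"
      using far r norm_ge_zero[of i] by (smt (verit))+
    then show ?thesis
      using False u0 by (simp add: s_def)
  qed
  have "(\<lambda>k. integral\<^sup>L lborel (s k)) \<longlonglongrightarrow> integral\<^sup>L lborel du"
  proof (rule integral_dominated_convergence)
    show "integrable lborel (\<lambda>x. indicator K x * B)"
      using borel_integrable_compact[of K "\<lambda>_. B"] by (simp add: K_def mult.commute)
    have "continuous_on UNIV (s k)" for k
      unfolding s_def using h[of k] by (intro continuous_intros continuous_on_compose2[OF u_cont]) auto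
    then show "s k \<in> borel_measurable lborel" for k
      by (simp add: borel_measurable_continuous_onI)
    show "AE x in lborel. (\<lambda>k. s k x) \<longlonglongrightarrow> du x"
      using difference_quotient_LIMSEQ[OF line] by (simp add: s_def h_def)
  qed (use du_cont s_bound in \<open>auto intro: borel_measurable_continuous_onI\<close>)
  moreover have "integral\<^sup>L lborel (s k) = 0" for k
    unfolding s_def
    by (rule integral_difference_quotient_eq_0[OF integrable_lborel_compact_support[OF u_cont S u0]])
  ultimately show ?thesis
    using LIMSEQ_unique[of _ "integral\<^sup>L lborel du" 0] by simp
qed

section \<open>Integration by parts\<close>

lemma has_derivative_zero_outside:
  assumes "closed S" "\<And>y. y \<notin> S \<Longrightarrow> u y = 0" "x \<notin> S"
  shows "(u has_derivative (\<lambda>_. 0)) (at x)"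
  using has_derivative_transform_within_open[of "\<lambda>_. 0" "\<lambda>_. 0" x UNIV "- S" u] assms by auto

lemma has_derivative_outside_support:
  assumes "closed S" "\<And>y. y \<notin> S \<Longrightarrow> u y = 0" "x \<notin> S" "(u has_derivative D) (at x)"
  shows "D = (\<lambda>_. 0)"
  using has_derivative_unique[OF assms(4) has_derivative_zero_outside[OF assms(1-3)]] .

lemma continuous_on_UNIV_if_compact_support:
  assumes "open \<Omega>" "closed S" "S \<subseteq> \<Omega>" "continuous_on \<Omega> f" "\<And>x. x \<notin> S \<Longrightarrow> f x = 0"
  shows "continuous_on UNIV f"
proof -
  have "continuous_on (- S) f"
    using continuous_on_const by (rule continuous_on_eq) (use assms(5) in auto)
  then have "continuous_on (\<Omega> \<union> - S) f"
    using assms(1,2,4) by (intro continuous_on_open_Un) auto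
  moreover have "\<Omega> \<union> - S = UNIV"
    using assms(3) by auto
  ultimately show ?thesis
    by simp
qed

lemma has_derivative_mult_compact_support:
  fixes \<psi> \<eta> :: "'a::euclidean_space \<Rightarrow> real"
  assumes S: "closed S" "S \<subseteq> \<Omega>" and \<eta>0: "\<And>x. x \<notin> S \<Longrightarrow> \<eta> x = 0"
    and \<eta>_deriv: "\<And>x. (\<eta> has_derivative D\<eta> x) (at x)"
    and \<psi>_deriv: "\<And>x. x \<in> \<Omega> \<Longrightarrow> (\<psi> has_derivative D\<psi> x) (at x)"
  shows "((\<lambda>x. \<psi> x * \<eta> x) has_derivative (\<lambda>h. \<psi> y * D\<eta> y h + D\<psi> y h * \<eta> y)) (at y)"
proof (cases "y \<in> \<Omega>")
  case True
  show ?thesis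
    by (rule has_derivative_mult[OF \<psi>_deriv[OF True] \<eta>_deriv, THEN has_derivative_eq_rhs]) auto
next
  case False
  then have "y \<notin> S"
    using S(2) by auto
  then show ?thesis
    using has_derivative_zero_outside[OF S(1) _ \<open>y \<notin> S\<close>, of "\<lambda>x. \<psi> x * \<eta> x"] \<eta>0
      has_derivative_outside_support[OF S(1) \<eta>0 \<open>y \<notin> S\<close> \<eta>_deriv]
    by simp
qed

lemma integration_by_parts_compact_support:
  fixes \<psi> \<eta> :: "'a::euclidean_space \<Rightarrow> real"
  assumes \<Omega>: "open \<Omega>" and S: "compact S" "S \<subseteq> \<Omega>" and \<eta>0: "\<And>x. x \<notin> S \<Longrightarrow> \<eta> x = 0"
    and \<eta>_deriv: "\<And>x. (\<eta> has_derivative D\<eta> x) (at x)"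
    and D\<eta>_cont: "continuous_on UNIV (\<lambda>x. D\<eta> x i)"
    and \<psi>_deriv: "\<And>x. x \<in> \<Omega> \<Longrightarrow> (\<psi> has_derivative D\<psi> x) (at x)"
    and D\<psi>_cont: "continuous_on \<Omega> (\<lambda>x. D\<psi> x i)"
  shows "set_integrable lebesgue \<Omega> (\<lambda>x. \<psi> x * D\<eta> x i)"
    and "set_integrable lebesgue \<Omega> (\<lambda>x. D\<psi> x i * \<eta> x)"
    and "(LINT x:\<Omega>|lebesgue. \<psi> x * D\<eta> x i) = - (LINT x:\<Omega>|lebesgue. D\<psi> x i * \<eta> x)"
proof -
  have S_closed: "closed S"
    using S(1) by (rule compact_imp_closed)
  have D\<eta>0: "D\<eta> x = (\<lambda>_. 0)" if "x \<notin> S" for x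
    by (rule has_derivative_outside_support[OF S_closed \<eta>0 that \<eta>_deriv])
  have \<psi>_cont: "continuous_on \<Omega> \<psi>"
    using \<psi>_deriv has_derivative_continuous by (meson continuous_at_imp_continuous_on)
  have \<eta>_cont: "continuous_on \<Omega> \<eta>"
    using \<eta>_deriv has_derivative_continuous by (meson continuous_at_imp_continuous_on)
  define a where "a = (\<lambda>x. \<psi> x * D\<eta> x i)"
  define b where "b = (\<lambda>x. D\<psi> x i * \<eta> x)"
  have a0: "a x = 0" and b0: "b x = 0" if "x \<notin> S" for x
    using that D\<eta>0 \<eta>0 by (simp_all add: a_def b_def)
  have a_cont: "continuous_on UNIV a"
    using \<Omega> S_closed S(2) _ a0
    by (rule continuous_on_UNIV_if_compact_support)
      (auto simp: a_def intro!: continuous_intros \<psi>_cont continuous_on_subset[OF D\<eta>_cont])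
  have b_cont: "continuous_on UNIV b"
    using \<Omega> S_closed S(2) _ b0
    by (rule continuous_on_UNIV_if_compact_support)
      (auto simp: b_def intro!: continuous_intros \<eta>_cont D\<psi>_cont)
  have "integral\<^sup>L lborel (\<lambda>x. a x + b x) = 0"
    by (rule integral_partial_derivative_compact_support[OF S(1) _ _ _
          has_derivative_mult_compact_support[OF S_closed S(2) \<eta>0 \<eta>_deriv \<psi>_deriv]])
      (use \<eta>0 a0 b0 a_cont b_cont in \<open>auto simp: a_def b_def intro!: continuous_on_add\<close>)
  then have "integral\<^sup>L lborel a = - integral\<^sup>L lborel b"
    using integrable_lborel_compact_support[OF a_cont S(1) a0]
      integrable_lborel_compact_support[OF b_cont S(1) b0] by simp
  then show "(LINT x:\<Omega>|lebesgue. \<psi> x * D\<eta> x i) = - (LINT x:\<Omega>|lebesgue. D\<psi> x i * \<eta> x)"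
    using set_integral_compact_support(2)[OF a_cont S a0] set_integral_compact_support(2)[OF b_cont S b0]
    unfolding a_def b_def by simp
  show "set_integrable lebesgue \<Omega> (\<lambda>x. \<psi> x * D\<eta> x i)"
    using set_integral_compact_support(1)[OF a_cont S a0] unfolding a_def .
  show "set_integrable lebesgue \<Omega> (\<lambda>x. D\<psi> x i * \<eta> x)"
    using set_integral_compact_support(1)[OF b_cont S b0] unfolding b_def .
qed

section \<open>Weak gradients and weak supersolutions\<close>

lemma Lp_loc_if_continuous_on:
  fixes u :: "'a::euclidean_space \<Rightarrow> 'b::euclidean_space"
  assumes "continuous_on \<Omega> u" "0 < p"
  shows "Lp_loc p \<Omega> u"
  unfolding Lp_loc_def
proof (intro allI impI conjI)
  fix K assume K: "compact K \<and> K \<subseteq> \<Omega>"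
  then have u_cont: "continuous_on K u"
    using assms(1) continuous_on_subset by blast
  have "integrable lborel (\<lambda>x. indicator K x *\<^sub>R u x)"
    using K u_cont by (intro borel_integrable_compact) auto
  then show "set_borel_measurable lebesgue K u"
    unfolding set_borel_measurable_def by (intro measurable_completion) auto
  have "continuous_on K (\<lambda>x. norm (u x) powr p)"
    using u_cont assms(2) by (intro continuous_on_powr' continuous_on_norm continuous_intros) auto
  then have "integrable lborel (\<lambda>x. indicator K x *\<^sub>R norm (u x) powr p)"
    using K by (intro borel_integrable_compact) auto
  then show "set_integrable lebesgue K (\<lambda>x. norm (u x) powr p)"
    unfolding set_integrable_def by (intro integrable_completion[THEN iffD2]) auto
qed

lemma test_fun_has_derivative:
  assumes "test_fun \<Omega> \<eta>"
  shows "(\<eta> has_derivative frechet_derivative \<eta> (at x)) (at x)"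
proof -
  have "smooth_fun \<eta>"
    using assms by (simp add: test_fun_def)
  then have "\<eta> differentiable (at x)"
    by (cases rule: smooth_fun.cases) blast
  then show ?thesis
    by (rule frechet_derivative_works[THEN iffD1])
qed

lemma test_fun_partial_continuous:
  assumes "test_fun \<Omega> \<eta>" "b \<in> Basis"
  shows "continuous_on UNIV (\<lambda>x. frechet_derivative \<eta> (at x) b)"
proof -
  have "smooth_fun \<eta>"
    using assms by (simp add: test_fun_def)
  then have "smooth_fun (\<lambda>x. frechet_derivative \<eta> (at x) b)"
    using assms(2) by (cases rule: smooth_fun.cases) blast
  then have "(\<lambda>x. frechet_derivative \<eta> (at x) b) differentiable (at y)" for y
    by (cases rule: smooth_fun.cases) blast
  then show ?thesis
    by (simp add: continuous_at_imp_continuous_on differentiable_imp_continuous_within)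
qed

lemma test_fun_support:
  assumes "test_fun \<Omega> \<eta>"
  shows "compact (closure {x. \<eta> x \<noteq> 0})" "closure {x. \<eta> x \<noteq> 0} \<subseteq> \<Omega>"
    and "\<And>x. x \<notin> closure {x. \<eta> x \<noteq> 0} \<Longrightarrow> \<eta> x = 0"
  using assms closure_subset[of "{x. \<eta> x \<noteq> 0}"] by (auto simp: test_fun_def)

lemma integration_by_parts_test_fun:
  assumes \<Omega>: "open \<Omega>" and \<eta>: "test_fun \<Omega> \<eta>" and b: "b \<in> Basis"
    and \<psi>_deriv: "\<And>x. x \<in> \<Omega> \<Longrightarrow> (\<psi> has_derivative D\<psi> x) (at x)"
    and D\<psi>_cont: "continuous_on \<Omega> (\<lambda>x. D\<psi> x b)"
  shows "set_integrable lebesgue \<Omega> (\<lambda>x. \<psi> x * frechet_derivative \<eta> (at x) b)"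
    and "set_integrable lebesgue \<Omega> (\<lambda>x. D\<psi> x b * \<eta> x)"
    and "(LINT x:\<Omega>|lebesgue. \<psi> x * frechet_derivative \<eta> (at x) b)
           = - (LINT x:\<Omega>|lebesgue. D\<psi> x b * \<eta> x)"
  using integration_by_parts_compact_support[OF \<Omega> test_fun_support[OF \<eta>]
      test_fun_has_derivative[OF \<eta>] test_fun_partial_continuous[OF \<eta> b] \<psi>_deriv D\<psi>_cont]
  by auto

lemma set_integrable_test_fun:
  assumes "test_fun \<Omega> \<eta>"
  shows "set_integrable lebesgue \<Omega> \<eta>"
proof (rule set_integral_compact_support(1)[OF _ test_fun_support[OF assms]])
  show "continuous_on UNIV \<eta>"
    using test_fun_has_derivative[OF assms] has_derivative_continuous
    by (meson continuous_at_imp_continuous_on)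
qed

lemma weak_gradient_if_has_derivative:
  assumes \<Omega>: "open \<Omega>" and v_deriv: "\<And>x. x \<in> \<Omega> \<Longrightarrow> (v has_derivative (\<lambda>h. g x \<bullet> h)) (at x)"
    and g_cont: "continuous_on \<Omega> g"
  shows "weak_gradient \<Omega> v g"
  unfolding weak_gradient_def
proof (intro conjI allI impI ballI)
  have "continuous_on \<Omega> v"
    using v_deriv has_derivative_continuous by (meson continuous_at_imp_continuous_on)
  then show "Lp_loc 1 \<Omega> v"
    by (rule Lp_loc_if_continuous_on) simp
  show "Lp_loc 1 \<Omega> g"
    using g_cont by (rule Lp_loc_if_continuous_on) simp
  fix \<eta> and i :: 'a
  assume "test_fun \<Omega> \<eta>" "i \<in> Basis"
  then show "(LINT x:\<Omega>|lebesgue. v x * frechet_derivative \<eta> (at x) i) = - (LINT x:\<Omega>|lebesgue. (g x \<bullet> i) * \<eta> x)"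
    using integration_by_parts_test_fun(3)[OF \<Omega> _ _ v_deriv] g_cont
    by (simp add: continuous_on_inner continuous_on_const)
qed

lemma set_integrable_sum:
  fixes f :: "'i \<Rightarrow> 'a \<Rightarrow> real"
  assumes "finite I" "\<And>i. i \<in> I \<Longrightarrow> set_integrable M A (f i)"
  shows "set_integrable M A (\<lambda>x. \<Sum>i\<in>I. f i x)"
  using assms unfolding set_integrable_def scaleR_sum_right by (intro Bochner_Integration.integrable_sum)

lemma set_integral_sum:
  fixes f :: "'i \<Rightarrow> 'a \<Rightarrow> real"
  assumes "finite I" "\<And>i. i \<in> I \<Longrightarrow> set_integrable M A (f i)"
  shows "(LINT x:A|M. (\<Sum>i\<in>I. f i x)) = (\<Sum>i\<in>I. LINT x:A|M. f i x)"
  using assms unfolding set_integrable_def set_lebesgue_integral_def scaleR_sum_right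
  by (intro Bochner_Integration.integral_sum)

lemma integration_by_parts_divergence:
  fixes F :: "'a::euclidean_space \<Rightarrow> 'a"
  assumes \<Omega>: "open \<Omega>" and \<eta>: "test_fun \<Omega> \<eta>"
    and F_deriv: "\<And>x. x \<in> \<Omega> \<Longrightarrow> (F has_derivative F' x) (at x)"
    and F'_cont: "\<And>b. b \<in> Basis \<Longrightarrow> continuous_on \<Omega> (\<lambda>x. F' x b \<bullet> b)"
  shows "set_integrable lebesgue \<Omega> (\<lambda>x. F x \<bullet> grad \<eta> x)"
    and "set_integrable lebesgue \<Omega> (\<lambda>x. (\<Sum>b\<in>Basis. F' x b \<bullet> b) * \<eta> x)"
    and "(LINT x:\<Omega>|lebesgue. F x \<bullet> grad \<eta> x)
           = - (LINT x:\<Omega>|lebesgue. (\<Sum>b\<in>Basis. F' x b \<bullet> b) * \<eta> x)"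
proof -
  have component_deriv: "((\<lambda>y. F y \<bullet> b) has_derivative (\<lambda>h. F' x h \<bullet> b)) (at x)" if "x \<in> \<Omega>" for x b
    using F_deriv[OF that] by (rule has_derivative_inner_left)
  note ibp = integration_by_parts_test_fun[OF \<Omega> \<eta> _ component_deriv F'_cont]
  have flux: "F x \<bullet> grad \<eta> x = (\<Sum>b\<in>Basis. (F x \<bullet> b) * frechet_derivative \<eta> (at x) b)" for x
    by (simp add: grad_def inner_sum_right mult.commute)
  have div: "(\<Sum>b\<in>Basis. F' x b \<bullet> b) * \<eta> x = (\<Sum>b\<in>Basis. (F' x b \<bullet> b) * \<eta> x)" for x
    by (simp add: sum_distrib_right)
  show "set_integrable lebesgue \<Omega> (\<lambda>x. F x \<bullet> grad \<eta> x)"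
    unfolding flux by (intro set_integrable_sum ibp(1)) auto
  show "set_integrable lebesgue \<Omega> (\<lambda>x. (\<Sum>b\<in>Basis. F' x b \<bullet> b) * \<eta> x)"
    unfolding div by (intro set_integrable_sum ibp(2)) auto
  have "(LINT x:\<Omega>|lebesgue. F x \<bullet> grad \<eta> x)
      = (\<Sum>b\<in>Basis. LINT x:\<Omega>|lebesgue. (F x \<bullet> b) * frechet_derivative \<eta> (at x) b)"
    unfolding flux by (intro set_integral_sum ibp(1)) auto
  also have "\<dots> = (\<Sum>b\<in>Basis. - (LINT x:\<Omega>|lebesgue. (F' x b \<bullet> b) * \<eta> x))"
    by (intro sum.cong refl ibp(3))
  also have "\<dots> = - (\<Sum>b\<in>Basis. LINT x:\<Omega>|lebesgue. (F' x b \<bullet> b) * \<eta> x)"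
    by (simp add: sum_negf)
  also have "(\<Sum>b\<in>Basis. LINT x:\<Omega>|lebesgue. (F' x b \<bullet> b) * \<eta> x)
      = (LINT x:\<Omega>|lebesgue. (\<Sum>b\<in>Basis. (F' x b \<bullet> b) * \<eta> x))"
    by (intro set_integral_sum[symmetric] ibp(2)) auto
  finally show "(LINT x:\<Omega>|lebesgue. F x \<bullet> grad \<eta> x)
          = - (LINT x:\<Omega>|lebesgue. (\<Sum>b\<in>Basis. F' x b \<bullet> b) * \<eta> x)"
    unfolding div .
qed

lemma Linf_on_bound:
  assumes "Linf_on S f"
  obtains C where "0 \<le> C" "AE x in lebesgue. x \<in> S \<longrightarrow> \<bar>f x\<bar> \<le> C"
proof -
  obtain C where "AE x in lebesgue. x \<in> S \<longrightarrow> \<bar>f x\<bar> \<le> C"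
    using assms by (auto simp: Linf_on_def)
  then have "AE x in lebesgue. x \<in> S \<longrightarrow> \<bar>f x\<bar> \<le> max C 0"
    by (rule eventually_mono) auto
  then show ?thesis
    by (intro that[of "max C 0"]) auto
qed

lemma Linf_norm_nonneg:
  assumes "Linf_on S f"
  shows "0 \<le> Linf_norm S f"
proof -
  obtain C where "0 \<le> C" "AE x in lebesgue. x \<in> S \<longrightarrow> \<bar>f x\<bar> \<le> C"
    using assms by (rule Linf_on_bound)
  then show ?thesis
    unfolding Linf_norm_def by (intro cInf_greatest) auto
qed

lemma AE_abs_le_Linf_norm:
  assumes "Linf_on S f"
  shows "AE x in lebesgue. x \<in> S \<longrightarrow> \<bar>f x\<bar> \<le> Linf_norm S f"
proof -
  define Cs where "Cs = {C. 0 \<le> C \<and> (AE x in lebesgue. x \<in> S \<longrightarrow> \<bar>f x\<bar> \<le> C)}"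
  obtain C where "0 \<le> C" "AE x in lebesgue. x \<in> S \<longrightarrow> \<bar>f x\<bar> \<le> C"
    using assms by (rule Linf_on_bound)
  then have Cs: "Cs \<noteq> {}"
    by (auto simp: Cs_def)
  have approx: "AE x in lebesgue. x \<in> S \<longrightarrow> \<bar>f x\<bar> \<le> Inf Cs + inverse (Suc k)" for k
  proof -
    obtain C where "C \<in> Cs" "C < Inf Cs + inverse (Suc k)"
      using cInf_lessD[OF Cs, of "Inf Cs + inverse (Suc k)"] by auto
    then show ?thesis
      by (auto simp: Cs_def elim: eventually_mono)
  qed
  have "AE x in lebesgue. \<forall>k. x \<in> S \<longrightarrow> \<bar>f x\<bar> \<le> Inf Cs + inverse (Suc k)"
    unfolding AE_all_countable using approx by blast
  then show ?thesis
  proof (rule eventually_mono, intro impI)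
    fix x assume x: "\<forall>k. x \<in> S \<longrightarrow> \<bar>f x\<bar> \<le> Inf Cs + inverse (Suc k)" and "x \<in> S"
    show "\<bar>f x\<bar> \<le> Linf_norm S f"
    proof (rule ccontr)
      assume "\<not> \<bar>f x\<bar> \<le> Linf_norm S f"
      then have "0 < \<bar>f x\<bar> - Inf Cs"
        by (simp add: Linf_norm_def Cs_def)
      then obtain k where "inverse (Suc k) < \<bar>f x\<bar> - Inf Cs"
        using reals_Archimedean by blast
      moreover have "\<bar>f x\<bar> \<le> Inf Cs + inverse (Suc k)"
        using x \<open>x \<in> S\<close> by blast
      ultimately show False
        by linarith
    qed
  qed
qed

lemma Linf_on_subset:
  assumes "Linf_on B f" "\<Omega> \<subseteq> B" "\<Omega> \<in> sets lebesgue"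
  shows "Linf_on \<Omega> f"
proof -
  have "(\<lambda>x. indicator \<Omega> x *\<^sub>R f x) = (\<lambda>x. indicator \<Omega> x * (indicator B x *\<^sub>R f x))"
    using assms(2) by (auto simp: fun_eq_iff indicator_def)
  then have "set_borel_measurable lebesgue \<Omega> f"
    using assms(1,3) unfolding Linf_on_def set_borel_measurable_def
    by (simp add: borel_measurable_times borel_measurable_indicator)
  moreover obtain C where "AE x in lebesgue. x \<in> B \<longrightarrow> \<bar>f x\<bar> \<le> C"
    using assms(1) by (auto simp: Linf_on_def)
  then have "AE x in lebesgue. x \<in> \<Omega> \<longrightarrow> \<bar>f x\<bar> \<le> C"
    using assms(2) by (auto elim!: eventually_mono)
  ultimately show ?thesis
    by (auto simp: Linf_on_def)
qed

lemma set_integrable_Linf_mult: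
  fixes f \<eta> :: "'a::euclidean_space \<Rightarrow> real"
  assumes f: "Linf_on \<Omega> f" and \<eta>: "set_integrable lebesgue \<Omega> \<eta>"
  shows "set_integrable lebesgue \<Omega> (\<lambda>x. f x * \<eta> x)"
proof -
  obtain C where "0 \<le> C" and C: "AE x in lebesgue. x \<in> \<Omega> \<longrightarrow> \<bar>f x\<bar> \<le> C"
    using f by (rule Linf_on_bound)
  show ?thesis
  proof (rule set_integrable_bound)
    show "set_integrable lebesgue \<Omega> (\<lambda>x. C * \<eta> x)"
      using \<eta> by (rule set_integrable_mult_right)
    have "(\<lambda>x. indicator \<Omega> x *\<^sub>R (f x * \<eta> x)) = (\<lambda>x. (indicator \<Omega> x *\<^sub>R f x) * (indicator \<Omega> x *\<^sub>R \<eta> x))"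
      by (auto simp: fun_eq_iff indicator_def)
    moreover have "(\<lambda>x. (indicator \<Omega> x *\<^sub>R f x) * (indicator \<Omega> x *\<^sub>R \<eta> x)) \<in> borel_measurable lebesgue"
      using f \<eta> unfolding Linf_on_def set_borel_measurable_def set_integrable_def
      by (intro borel_measurable_times) auto
    ultimately show "set_borel_measurable lebesgue \<Omega> (\<lambda>x. f x * \<eta> x)"
      unfolding set_borel_measurable_def by simp
    show "AE x in lebesgue. x \<in> \<Omega> \<longrightarrow> norm (f x * \<eta> x) \<le> norm (C * \<eta> x)"
      using C \<open>0 \<le> C\<close> by eventually_elim (auto simp: abs_mult intro: mult_right_mono)
  qed
qed

lemma weak_supersolution_if_flux_divergence:
  fixes v f :: "'a::euclidean_space \<Rightarrow> real" and g F :: "'a \<Rightarrow> 'a" and F' :: "'a \<Rightarrow> 'a \<Rightarrow> 'a"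
  assumes \<Omega>: "open \<Omega>" and p: "0 < p"
    and v_deriv: "\<And>x. x \<in> \<Omega> \<Longrightarrow> (v has_derivative (\<lambda>h. g x \<bullet> h)) (at x)"
    and g_cont: "continuous_on \<Omega> g"
    and flux: "\<And>x. x \<in> \<Omega> \<Longrightarrow> (norm (g x) powr (p - 2) * A (norm (g x))) *\<^sub>R g x = F x"
    and F_deriv: "\<And>x. x \<in> \<Omega> \<Longrightarrow> (F has_derivative F' x) (at x)"
    and F'_cont: "\<And>b. b \<in> Basis \<Longrightarrow> continuous_on \<Omega> (\<lambda>x. F' x b \<bullet> b)"
    and f: "Linf_on \<Omega> f"
    and f_le: "AE x in lebesgue. x \<in> \<Omega> \<longrightarrow> f x \<le> - (\<Sum>b\<in>Basis. F' x b \<bullet> b)"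
  shows "weak_supersolution p A f \<Omega> v"
  unfolding weak_supersolution_def
proof (intro exI[of _ g] conjI allI impI)
  show "weak_gradient \<Omega> v g"
    by (rule weak_gradient_if_has_derivative[OF \<Omega> v_deriv g_cont])
  have "continuous_on \<Omega> v"
    using v_deriv has_derivative_continuous by (meson continuous_at_imp_continuous_on)
  then show "Lp_loc p \<Omega> v"
    using p by (rule Lp_loc_if_continuous_on)
  show "Lp_loc p \<Omega> g"
    using g_cont p by (rule Lp_loc_if_continuous_on)
  fix \<eta> assume "test_fun \<Omega> \<eta> \<and> (\<forall>x. 0 \<le> \<eta> x)"
  then have \<eta>: "test_fun \<Omega> \<eta>" and \<eta>_nonneg: "\<And>x. 0 \<le> \<eta> x"
    by auto
  let ?div = "\<lambda>x. \<Sum>b\<in>Basis. F' x b \<bullet> b"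
  note div_thm = integration_by_parts_divergence[OF \<Omega> \<eta> F_deriv F'_cont]
  have integrand: "norm (g x) powr (p - 2) * A (norm (g x)) * (g x \<bullet> grad \<eta> x) = F x \<bullet> grad \<eta> x"
    if "x \<in> \<Omega>" for x
    using flux[OF that, symmetric] by simp
  show "set_integrable lebesgue \<Omega> (\<lambda>x. norm (g x) powr (p - 2) * A (norm (g x)) * (g x \<bullet> grad \<eta> x))"
    using div_thm(1) by (simp add: set_integrable_cong[OF refl refl integrand])
  show f\<eta>: "set_integrable lebesgue \<Omega> (\<lambda>x. f x * \<eta> x)"
    by (rule set_integrable_Linf_mult[OF f set_integrable_test_fun[OF \<eta>]])
  have div\<eta>: "set_integrable lebesgue \<Omega> (\<lambda>x. - ?div x * \<eta> x)"
    using set_integrable_mult_right[of "-1", OF div_thm(2)] by simp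
  have "(LINT x:\<Omega>|lebesgue. f x * \<eta> x) \<le> (LINT x:\<Omega>|lebesgue. - ?div x * \<eta> x)"
  proof (rule set_integral_mono_AE[OF f\<eta> div\<eta>])
    show "AE x\<in>\<Omega> in lebesgue. f x * \<eta> x \<le> - ?div x * \<eta> x"
      using f_le by (rule eventually_mono) (metis \<eta>_nonneg mult_right_mono)
  qed
  also have "\<dots> = - (LINT x:\<Omega>|lebesgue. ?div x * \<eta> x)"
    using set_integral_uminus[OF div_thm(2)] by simp
  also have "\<dots> = (LINT x:\<Omega>|lebesgue. F x \<bullet> grad \<eta> x)"
    by (simp add: div_thm(3))
  also have "\<dots> = (LINT x:\<Omega>|lebesgue. norm (g x) powr (p - 2) * A (norm (g x)) * (g x \<bullet> grad \<eta> x))"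
    using \<Omega> integrand by (intro set_lebesgue_integral_cong) auto
  finally show "(LINT x:\<Omega>|lebesgue. f x * \<eta> x)
      \<le> (LINT x:\<Omega>|lebesgue. norm (g x) powr (p - 2) * A (norm (g x)) * (g x \<bullet> grad \<eta> x))" .
qed

section \<open>Radial vector fields\<close>

lemma has_derivative_radial:
  fixes x0 x :: "'a::euclidean_space"
  assumes \<Phi>: "(\<Phi> has_real_derivative d) (at (norm (x - x0)))" and x: "x \<noteq> x0"
  shows "((\<lambda>y. \<Phi> (norm (y - x0))) has_derivative (\<lambda>h. ((d / norm (x - x0)) *\<^sub>R (x - x0)) \<bullet> h)) (at x)"
proof -
  have "(norm has_derivative (\<lambda>h. h \<bullet> sgn (x - x0))) (at (x - x0))"
    using has_derivative_norm[of "x - x0"] x by simp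
  from has_derivative_compose[OF has_derivative_diff[OF has_derivative_ident has_derivative_const] this]
  have "((\<lambda>y. norm (y - x0)) has_derivative (\<lambda>h. h \<bullet> sgn (x - x0))) (at x)"
    by simp
  from has_derivative_compose[OF this \<Phi>[unfolded has_field_derivative_def]]
  have "((\<lambda>y. \<Phi> (norm (y - x0))) has_derivative (\<lambda>h. d * (h \<bullet> sgn (x - x0)))) (at x)" .
  then show ?thesis
    by (simp add: sgn_div_norm inner_commute divide_inverse mult.assoc)
qed

lemma has_derivative_radial_field:
  fixes x0 x :: "'a::euclidean_space"
  assumes "(\<Phi> has_real_derivative d) (at (norm (x - x0)))" and "x \<noteq> x0"
  shows "((\<lambda>y. \<Phi> (norm (y - x0)) *\<^sub>R (y - x0)) has_derivative
           (\<lambda>h. \<Phi> (norm (x - x0)) *\<^sub>R h + (d / norm (x - x0) * ((x - x0) \<bullet> h)) *\<^sub>R (x - x0))) (at x)"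
  using has_derivative_scaleR[OF has_derivative_radial[OF assms]
      has_derivative_diff[OF has_derivative_ident has_derivative_const]]
  by (simp add: add.commute)

lemma divergence_radial_field:
  fixes x0 x :: "'a::euclidean_space" and c d :: real
  assumes "x \<noteq> x0"
  shows "(\<Sum>b\<in>Basis. (c *\<^sub>R b + (d / norm (x - x0) * ((x - x0) \<bullet> b)) *\<^sub>R (x - x0)) \<bullet> b)
           = real DIM('a) * c + d * norm (x - x0)"
proof -
  have "(\<Sum>b\<in>Basis. (c *\<^sub>R b + (d / norm (x - x0) * ((x - x0) \<bullet> b)) *\<^sub>R (x - x0)) \<bullet> b)
      = (\<Sum>b\<in>(Basis::'a set). c) + d / norm (x - x0) * (\<Sum>b\<in>Basis. ((x - x0) \<bullet> b) * ((x - x0) \<bullet> b))"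
    by (simp add: inner_add_left inner_Basis sum.distrib sum_distrib_left mult.assoc cong: sum.cong)
  also have "(\<Sum>b\<in>Basis. ((x - x0) \<bullet> b) * ((x - x0) \<bullet> b)) = norm (x - x0) * norm (x - x0)"
    by (simp add: euclidean_inner[symmetric] norm_eq_sqrt_inner)
  finally show ?thesis
    using assms by simp
qed

lemma divergence_radial_power_field:
  fixes x0 x :: "'a::euclidean_space" and C M :: real
  defines "n \<equiv> real DIM('a)" and "r \<equiv> norm (x - x0)"
  assumes "x \<noteq> x0"
  shows "(\<Sum>b\<in>Basis. ((C * r powr (- n) - M / n) *\<^sub>R b
           + (- n * C * r powr (- n - 1) / r * ((x - x0) \<bullet> b)) *\<^sub>R (x - x0)) \<bullet> b) = - M"
proof -
  have "0 < r" "0 < n"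
    using assms by (simp_all add: r_def n_def)
  have "r powr (- n - 1) * r = r powr (- n)"
    using \<open>0 < r\<close> powr_add[of r "- n - 1" 1] by simp
  then show ?thesis
    using divergence_radial_field[OF assms(3), of "C * r powr (- n) - M / n" "- n * C * r powr (- n - 1)"]
      \<open>0 < n\<close> by (simp add: n_def[symmetric] r_def[symmetric] algebra_simps)
qed

lemma powr_le_powr_iff:
  fixes x y a :: real
  assumes "0 < a" "0 \<le> x" "0 \<le> y"
  shows "x powr a \<le> y powr a \<longleftrightarrow> x \<le> y"
  using assms powr_mono2[of a x y] powr_less_mono2[of a y x] by (meson less_le_not_le linorder_le_cases)

lemma powr_inverse_le_iff:
  fixes x y q :: real
  assumes "0 < q" "0 \<le> x" "0 \<le> y"
  shows "x powr (1 / q) \<le> y \<longleftrightarrow> x \<le> y powr q"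
  using powr_le_powr_iff[of q "x powr (1 / q)" y] assms by (simp add: powr_powr)

lemma le_powr_inverse_iff:
  fixes x y q :: real
  assumes "0 < q" "0 \<le> x" "0 \<le> y"
  shows "y \<le> x powr (1 / q) \<longleftrightarrow> y powr q \<le> x"
  using powr_le_powr_iff[of q y "x powr (1 / q)"] assms by (simp add: powr_powr)

lemma powr_add_le_powr_sum:
  fixes x y q :: real
  assumes "0 \<le> x" "0 \<le> y" "1 \<le> q"
  shows "x powr q + y powr q \<le> (x + y) powr q"
proof -
  have le: "z powr q \<le> z * (x + y) powr (q - 1)" if "0 \<le> z" "z \<le> x + y" for z
  proof -
    have "z powr q = z * z powr (q - 1)"
      using that powr_mult_base[of z "q - 1"] by simp
    also have "\<dots> \<le> z * (x + y) powr (q - 1)"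
      using that assms by (intro mult_left_mono powr_mono2) auto
    finally show ?thesis .
  qed
  have "x powr q + y powr q \<le> (x + y) * (x + y) powr (q - 1)"
    using le[of x] le[of y] assms by (simp add: distrib_right)
  also have "\<dots> = (x + y) powr q"
    using powr_mult_base[of "x + y" "q - 1"] assms by simp
  finally show ?thesis .
qed

lemma powr_inverse_add_le:
  fixes a B q :: real
  assumes "0 \<le> a" "0 \<le> B" "1 \<le> q"
  shows "(a powr q + B) powr (1 / q) \<le> a + B powr (1 / q)"
proof -
  have "(a powr q + B) powr (1 / q) \<le> ((a + B powr (1 / q)) powr q) powr (1 / q)"
    using powr_add_le_powr_sum[of a "B powr (1 / q)" q] assms
    by (intro powr_mono2) (auto simp: powr_powr)
  also have "\<dots> = a + B powr (1 / q)"
    using assms by (simp add: powr_powr)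
  finally show ?thesis .
qed

lemma image_Icc_mono_on:
  fixes f :: "real \<Rightarrow> real"
  assumes "continuous_on {a..b} f" "mono_on {a..b} f" "a \<le> b"
  shows "f ` {a..b} = {f a..f b}"
proof
  show "f ` {a..b} \<subseteq> {f a..f b}"
    using assms(2,3) by (auto simp: mono_on_def)
  show "{f a..f b} \<subseteq> f ` {a..b}"
  proof
    fix y assume "y \<in> {f a..f b}"
    then obtain x where "a \<le> x" "x \<le> b" "f x = y"
      using IVT'[of f a y b] assms(1,3) by auto
    then show "y \<in> f ` {a..b}"
      by auto
  qed
qed

lemma
  fixes \<phi> :: "real \<Rightarrow> real"
  assumes cont: "continuous_on {0..} \<phi>" and mono: "strict_mono_on {0..} \<phi>" and zero: "\<phi> 0 = 0"
    and unbounded: "\<And>y. \<exists>t\<ge>0. y \<le> \<phi> t"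
  shows image_atLeast_0_eq: "\<phi> ` {0..} = {0..}"
    and continuous_on_the_inv_into_atLeast_0: "continuous_on {0..} (the_inv_into {0..} \<phi>)"
proof -
  have cont_Icc: "continuous_on {0..T} \<phi>" for T
    using cont by (rule continuous_on_subset) auto
  have mono_Icc: "mono_on {0..T} \<phi>" for T
    using strict_mono_on_imp_mono_on[OF mono] by (rule mono_on_subset) auto
  have image_Icc: "\<phi> ` {0..T} = {0..\<phi> T}" if "0 \<le> T" for T
    using image_Icc_mono_on[OF cont_Icc mono_Icc that] by (simp add: zero)
  show "\<phi> ` {0..} = {0..}"
  proof (intro equalityI subsetI)
    fix y assume "y \<in> \<phi> ` {0..}"
    then obtain t where "0 \<le> t" "y = \<phi> t"
      by auto
    then show "y \<in> {0..}"
      using image_Icc[of t] by auto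
  next
    fix y :: real
    assume "y \<in> {0..}"
    obtain T where "0 \<le> T" "y \<le> \<phi> T"
      using unbounded by blast
    then have "y \<in> \<phi> ` {0..T}"
      using image_Icc \<open>y \<in> {0..}\<close> by simp
    then show "y \<in> \<phi> ` {0..}"
      by auto
  qed
  show "continuous_on {0..} (the_inv_into {0..} \<phi>)"
    unfolding continuous_on_eq_continuous_within
  proof
    fix y :: real
    assume "y \<in> {0..}"
    obtain T where T: "0 \<le> T" "y + 1 \<le> \<phi> T"
      using unbounded by blast
    have "\<forall>t\<in>{0..T}. the_inv_into {0..} \<phi> (\<phi> t) = t"
      using the_inv_into_f_f[OF strict_mono_on_imp_inj_on[OF mono]] by simp
    from continuous_on_inv[OF cont_Icc compact_Icc this]
    have "continuous_on {0..\<phi> T} (the_inv_into {0..} \<phi>)"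
      by (simp only: image_Icc[OF T(1)])
    then have "continuous (at y within {0..\<phi> T}) (the_inv_into {0..} \<phi>)"
      using T \<open>y \<in> {0..}\<close> by (simp add: continuous_on_eq_continuous_within)
    moreover have "at y within {0..\<phi> T} = at y within {0..}"
      by (rule at_within_nhd[of _ "{..<\<phi> T}"]) (use T in auto)
    ultimately show "continuous (at y within {0..}) (the_inv_into {0..} \<phi>)"
      by simp
  qed
qed

lemma has_integral_Icc_0_powr:
  fixes \<beta> r c :: real
  assumes "-1 < \<beta>" "0 \<le> r"
  shows "((\<lambda>s. c * s powr \<beta>) has_integral (c * (r powr (\<beta> + 1) / (\<beta> + 1)))) {0..r}"
  using has_integral_mult_right[OF has_integral_powr_from_0[OF assms]] .

lemma integrable_on_Icc_0_if_powr_bound: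
  fixes w :: "real \<Rightarrow> real"
  assumes \<beta>: "-1 < \<beta>" and r: "0 \<le> r" and w_cont: "continuous_on {0<..r} w"
    and w_le: "\<And>s. 0 < s \<Longrightarrow> s \<le> r \<Longrightarrow> \<bar>w s\<bar> \<le> c * s powr \<beta>"
  shows "w integrable_on {0..r}"
proof -
  have Ioc_Icc: "g integrable_on {0<..r} \<longleftrightarrow> g integrable_on {0..r}" for g :: "real \<Rightarrow> real"
  proof (rule integrable_spike_set_eq)
    show "negligible ({0<..r} - {0..r} \<union> ({0..r} - {0<..r}))"
      by (rule negligible_subset[OF negligible_sing[of 0]]) auto
  qed
  have "w \<in> borel_measurable (lebesgue_on {0<..r})"
    using w_cont by (rule continuous_imp_measurable_on_sets_lebesgue) simp
  moreover have "(\<lambda>s. c * s powr \<beta>) integrable_on {0<..r}"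
    using has_integral_Icc_0_powr[OF \<beta> r, of c] Ioc_Icc by blast
  moreover have "\<bar>w s\<bar> \<le> c * s powr \<beta>" if "s \<in> {0<..r}" for s
    using w_le that by simp
  ultimately have "w integrable_on {0<..r}"
    by (rule measurable_bounded_by_integrable_imp_integrable_real) simp_all
  then show ?thesis
    using Ioc_Icc by blast
qed

lemma integral_Icc_0_ge_powr:
  fixes w :: "real \<Rightarrow> real"
  assumes "-1 < \<beta>" "0 \<le> r" "w integrable_on {0..r}" "\<And>s. 0 \<le> s \<Longrightarrow> s \<le> r \<Longrightarrow> c * s powr \<beta> \<le> w s"
  shows "c * (r powr (\<beta> + 1) / (\<beta> + 1)) \<le> integral {0..r} w"
  using has_integral_le[OF has_integral_Icc_0_powr[OF assms(1,2)] integrable_integral[OF assms(3)]] assms(4)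
  by auto

lemma integral_Icc_0_le_powr:
  fixes w :: "real \<Rightarrow> real"
  assumes "-1 < \<beta>" "0 \<le> r" "w integrable_on {0..r}" "\<And>s. 0 \<le> s \<Longrightarrow> s \<le> r \<Longrightarrow> w s \<le> c * s powr \<beta>"
  shows "integral {0..r} w \<le> c * (r powr (\<beta> + 1) / (\<beta> + 1))"
  using has_integral_le[OF integrable_integral[OF assms(3)] has_integral_Icc_0_powr[OF assms(1,2)]] assms(4)
  by auto

lemma has_real_derivative_integral_Icc_0:
  fixes w :: "real \<Rightarrow> real"
  assumes w_cont: "continuous_on {0<..<R} w" and w_int: "\<And>s. 0 \<le> s \<Longrightarrow> s < R \<Longrightarrow> w integrable_on {0..s}"
    and r: "0 < r" "r < R"
  shows "((\<lambda>s. integral {0..s} w) has_real_derivative w r) (at r)"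
proof -
  define a b where "a = r / 2" and "b = (r + R) / 2"
  have ab: "0 < a" "a < r" "r < b" "b < R"
    using r by (simp_all add: a_def b_def)
  have "((\<lambda>s. integral {a..s} w) has_vector_derivative w r) (at r within {a..b})"
    using ab by (intro integral_has_vector_derivative continuous_on_subset[OF w_cont]) auto
  moreover have "at r within {a..b} = at r"
    using ab by (intro at_within_interior) auto
  ultimately have "((\<lambda>s. integral {0..a} w + integral {a..s} w) has_real_derivative w r) (at r)"
    using has_vector_derivative_add[OF has_vector_derivative_const]
    by (force simp: has_real_derivative_iff_has_vector_derivative)
  then show ?thesis
  proof (rule has_field_derivative_transform_within_open)
    show "integral {0..a} w + integral {a..s} w = integral {0..s} w" if "s \<in> {a<..<b}" for s
      using that ab w_int[of s] by (intro Henstock_Kurzweil_Integration.integral_combine) auto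
  qed (use ab in auto)
qed

section \<open>The radial barrier\<close>

locale structure_function =
  fixes p \<delta> L :: real and A :: "real \<Rightarrow> real"
  assumes p_gt_1: "1 < p"
    and A_cont: "continuous_on {0..} A"
    and \<delta>_pos: "0 < \<delta>"
    and A_bounds: "\<forall>t\<ge>0. \<delta> \<le> A t \<and> A t \<le> L"
    and A_mono: "strict_mono_on {0<..} (\<lambda>t. t powr (p - 1) * A t)"
begin

definition phi :: "real \<Rightarrow> real" where
  "phi t = t powr (p - 1) * A t"

lemma L_pos: "0 < L"
  using A_bounds \<delta>_pos by force

lemma phi_bounds:
  assumes "0 \<le> t"
  shows "\<delta> * t powr (p - 1) \<le> phi t" and "phi t \<le> L * t powr (p - 1)"
proof -
  have "\<delta> \<le> A t" "A t \<le> L"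
    using A_bounds assms by auto
  then show "\<delta> * t powr (p - 1) \<le> phi t" and "phi t \<le> L * t powr (p - 1)"
    by (auto simp: phi_def mult.commute intro!: mult_right_mono)
qed

lemma phi_0 [simp]: "phi 0 = 0"
  by (simp add: phi_def)

lemma phi_altdef:
  assumes "0 \<le> t"
  shows "phi t = t powr (p - 2) * A t * t"
proof -
  have "t powr (p - 1) = t powr (p - 2) * t"
    using assms powr_add[of t "p - 2" 1] by simp
  then show ?thesis
    by (simp add: phi_def mult_ac)
qed

lemma continuous_on_phi: "continuous_on {0..} phi"
  unfolding phi_def using p_gt_1 by (intro continuous_intros continuous_on_powr' A_cont) auto

lemma strict_mono_on_phi: "strict_mono_on {0..} phi"
proof (rule strict_mono_onI)
  fix s t :: real
  assume "s \<in> {0..}" "t \<in> {0..}" "s < t"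
  show "phi s < phi t"
  proof (cases "s = 0")
    case True
    then have "0 < \<delta> * t powr (p - 1)"
      using \<delta>_pos \<open>s < t\<close> by simp
    then show ?thesis
      using phi_bounds(1)[of t] True \<open>s < t\<close> by simp
  next
    case False
    then show ?thesis
      using A_mono \<open>s \<in> {0..}\<close> \<open>s < t\<close> unfolding strict_mono_on_def phi_def by auto
  qed
qed

lemma phi_unbounded: "\<exists>t\<ge>0. y \<le> phi t"
proof -
  define u where "u = max 1 (y / \<delta>)"
  define t where "t = u powr (1 / (p - 1))"
  have "y / \<delta> \<le> u"
    by (simp add: u_def)
  then have "y \<le> \<delta> * u"
    using \<delta>_pos by (simp add: pos_divide_le_eq mult.commute)
  also have "\<dots> = \<delta> * t powr (p - 1)"
    using p_gt_1 by (simp add: t_def u_def powr_powr)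
  also have "\<dots> \<le> phi t"
    by (rule phi_bounds(1)) (simp add: t_def)
  finally show ?thesis
    by (intro exI[of _ t]) (simp add: t_def)
qed

lemma
  assumes "0 \<le> y"
  shows the_inv_phi_nonneg: "0 \<le> the_inv_into {0..} phi y"
    and phi_the_inv_phi: "phi (the_inv_into {0..} phi y) = y"
proof -
  have inj: "inj_on phi {0..}"
    by (rule strict_mono_on_imp_inj_on[OF strict_mono_on_phi])
  have "y \<in> phi ` {0..}"
    using assms image_atLeast_0_eq[OF continuous_on_phi strict_mono_on_phi phi_0 phi_unbounded] by simp
  then show "0 \<le> the_inv_into {0..} phi y" and "phi (the_inv_into {0..} phi y) = y"
    using the_inv_into_into[OF inj, of y "{0..}"] f_the_inv_into_f[OF inj] by auto
qed

lemma continuous_on_the_inv_phi: "continuous_on {0..} (the_inv_into {0..} phi)"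
  by (rule continuous_on_the_inv_into_atLeast_0[OF continuous_on_phi strict_mono_on_phi phi_0 phi_unbounded])

text \<open>At \<open>r = 0\<close> the factor \<open>r powr (1 - n)\<close> is \<open>0\<close> by the convention \<open>0 powr _ = 0\<close>; this single
  point does not affect the integrals defining the barrier.\<close>

definition barrier_level :: "nat \<Rightarrow> real \<Rightarrow> real \<Rightarrow> real \<Rightarrow> real \<Rightarrow> real" where
  "barrier_level n R M a r = (a powr (p - 1) + M / n * (R ^ n - r ^ n)) * r powr (1 - real n)"

definition barrier_slope :: "nat \<Rightarrow> real \<Rightarrow> real \<Rightarrow> real \<Rightarrow> real \<Rightarrow> real" where
  "barrier_slope n R M a r = the_inv_into {0..} phi (barrier_level n R M a r)"

lemma barrier_level_nonneg:
  assumes "0 \<le> M" "0 \<le> r" "r \<le> R"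
  shows "0 \<le> barrier_level n R M a r"
proof -
  have "r ^ n \<le> R ^ n"
    using assms(2,3) by (simp add: power_mono)
  then show ?thesis
    using assms by (simp add: barrier_level_def)
qed

lemma
  assumes "0 \<le> M" "0 \<le> r" "r \<le> R"
  shows barrier_slope_nonneg: "0 \<le> barrier_slope n R M a r"
    and phi_barrier_slope: "phi (barrier_slope n R M a r) = barrier_level n R M a r"
  unfolding barrier_slope_def
  by (rule the_inv_phi_nonneg phi_the_inv_phi, rule barrier_level_nonneg[OF assms])+

lemma continuous_on_barrier_slope:
  assumes "0 \<le> M"
  shows "continuous_on {0<..R} (barrier_slope n R M a)"
  unfolding barrier_slope_def
proof (rule continuous_on_compose2[OF continuous_on_the_inv_phi])
  show "continuous_on {0<..R} (barrier_level n R M a)"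
    unfolding barrier_level_def by (intro continuous_intros) auto
  show "barrier_level n R M a ` {0<..R} \<subseteq> {0..}"
    using barrier_level_nonneg[OF assms] by auto
qed

lemma barrier_slope_lower_bound:
  assumes "0 \<le> a" "0 \<le> M" "0 \<le> r" "r \<le> R"
  shows "(1 / L) powr (1 / (p - 1)) * a * r powr ((1 - real n) / (p - 1)) \<le> barrier_slope n R M a r"
proof -
  define w where "w = barrier_slope n R M a r"
  have w: "0 \<le> w" and phi_w: "phi w = barrier_level n R M a r"
    using barrier_slope_nonneg[OF assms(2-4)] phi_barrier_slope[OF assms(2-4)] by (simp_all add: w_def)
  have "r ^ n \<le> R ^ n"
    using assms(3,4) by (simp add: power_mono)
  then have "a powr (p - 1) * r powr (1 - real n) \<le> phi w"
    using assms phi_w by (simp add: barrier_level_def mult_right_mono)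
  then have "a powr (p - 1) * r powr (1 - real n) / L \<le> w powr (p - 1)"
    using phi_bounds(2)[OF w] L_pos by (simp add: field_simps)
  then have "(a powr (p - 1) * r powr (1 - real n) / L) powr (1 / (p - 1)) \<le> w"
    using powr_inverse_le_iff[of "p - 1"] w p_gt_1 L_pos by simp
  moreover have "(a powr (p - 1) * r powr (1 - real n) / L) powr (1 / (p - 1))
      = (1 / L) powr (1 / (p - 1)) * a * r powr ((1 - real n) / (p - 1))"
    using assms p_gt_1 L_pos by (simp add: powr_mult powr_divide powr_powr)
  ultimately show ?thesis
    by (simp add: w_def)
qed

lemma barrier_slope_upper_bound:
  assumes "0 \<le> M" "0 \<le> r" "r \<le> R"
  shows "barrier_slope n R M a r
           \<le> ((a powr (p - 1) + M * R ^ n / n) / \<delta>) powr (1 / (p - 1)) * r powr ((1 - real n) / (p - 1))"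
proof -
  define w where "w = barrier_slope n R M a r"
  define C where "C = a powr (p - 1) + M * R ^ n / n"
  have w: "0 \<le> w" and phi_w: "phi w = barrier_level n R M a r"
    using barrier_slope_nonneg[OF assms] phi_barrier_slope[OF assms] by (simp_all add: w_def)
  have "C \<ge> 0"
    using assms by (simp add: C_def)
  have "M / n * (R ^ n - r ^ n) \<le> M * R ^ n / n"
    using assms by (simp add: divide_right_mono mult_left_mono)
  then have "phi w \<le> C * r powr (1 - real n)"
    using phi_w by (simp add: barrier_level_def C_def mult_right_mono)
  then have "w powr (p - 1) \<le> C * r powr (1 - real n) / \<delta>"
    using phi_bounds(1)[OF w] \<delta>_pos by (simp add: field_simps)
  then have "w \<le> (C * r powr (1 - real n) / \<delta>) powr (1 / (p - 1))"
    using le_powr_inverse_iff[of "p - 1"] w p_gt_1 \<delta>_pos \<open>C \<ge> 0\<close> by simp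
  moreover have "(C * r powr (1 - real n) / \<delta>) powr (1 / (p - 1))
      = (C / \<delta>) powr (1 / (p - 1)) * r powr ((1 - real n) / (p - 1))"
    using assms p_gt_1 \<delta>_pos \<open>C \<ge> 0\<close> by (simp add: powr_mult powr_divide powr_powr)
  ultimately show ?thesis
    by (simp add: w_def C_def)
qed

lemma integrable_barrier_slope:
  assumes "real n < p" "0 \<le> M" "0 \<le> r" "r \<le> R"
  shows "barrier_slope n R M a integrable_on {0..r}"
proof (rule integrable_on_Icc_0_if_powr_bound)
  show "-1 < (1 - real n) / (p - 1)"
    using assms(1) p_gt_1 by (simp add: field_simps)
  show "continuous_on {0<..r} (barrier_slope n R M a)"
    using continuous_on_barrier_slope[OF assms(2)] by (rule continuous_on_subset) (use assms in auto)
  show "\<bar>barrier_slope n R M a s\<bar>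
          \<le> ((a powr (p - 1) + M * R ^ n / n) / \<delta>) powr (1 / (p - 1)) * s powr ((1 - real n) / (p - 1))"
    if "0 < s" "s \<le> r" for s
  proof -
    have "0 \<le> barrier_slope n R M a s"
      using assms that by (intro barrier_slope_nonneg) auto
    then show ?thesis
      using barrier_slope_upper_bound[of M s R] assms that by simp
  qed
  show "0 \<le> r"
    by (rule assms(3))
qed

definition radial_barrier :: "real \<Rightarrow> real \<Rightarrow> real \<Rightarrow> 'a::euclidean_space \<Rightarrow> 'a \<Rightarrow> real" where
  "radial_barrier R M a x0 x = integral {0..norm (x - x0)} (barrier_slope DIM('a) R M a)"

definition barrier_gradient :: "real \<Rightarrow> real \<Rightarrow> real \<Rightarrow> 'a::euclidean_space \<Rightarrow> 'a \<Rightarrow> 'a" where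
  "barrier_gradient R M a x0 x = (barrier_slope DIM('a) R M a (norm (x - x0)) / norm (x - x0)) *\<^sub>R (x - x0)"

lemma radial_barrier_dist_eq:
  "dist x x0 = dist y x0 \<Longrightarrow> radial_barrier R M a x0 x = radial_barrier R M a x0 y"
  by (simp add: radial_barrier_def dist_norm)

lemma radial_barrier_bounds:
  fixes x0 x :: "'a::euclidean_space"
  defines "\<alpha> \<equiv> (p - real DIM('a)) / (p - 1)"
  assumes n: "2 \<le> DIM('a)" "real DIM('a) < p" and "0 \<le> a" "0 \<le> M" "x \<in> ball x0 R"
  shows "(1 / L) powr (1 / (p - 1)) * a * (norm (x - x0) powr \<alpha> / \<alpha>) \<le> radial_barrier R M a x0 x"
    and "radial_barrier R M a x0 x \<le> (1 / \<delta>) powr (1 / (p - 1)) *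
           (a + (R ^ DIM('a) * M / DIM('a)) powr (1 / (p - 1))) * (norm (x - x0) powr \<alpha> / \<alpha>)"
proof -
  define r where "r = norm (x - x0)"
  define \<beta> where "\<beta> = (1 - real DIM('a)) / (p - 1)"
  have r: "0 \<le> r" "r \<le> R"
    using assms(6) by (auto simp: r_def dist_norm norm_minus_commute)
  have \<beta>: "-1 < \<beta>" "\<beta> + 1 = \<alpha>"
    using n p_gt_1 by (simp_all add: \<alpha>_def \<beta>_def field_simps)
  have w_int: "barrier_slope DIM('a) R M a integrable_on {0..r}"
    by (rule integrable_barrier_slope[OF n(2) assms(5) r])
  have "(1 / L) powr (1 / (p - 1)) * a * (r powr (\<beta> + 1) / (\<beta> + 1))
      \<le> integral {0..r} (barrier_slope DIM('a) R M a)"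
    using barrier_slope_lower_bound[OF assms(4,5)] r(2) unfolding \<beta>_def
    by (intro integral_Icc_0_ge_powr[OF \<beta>(1)[unfolded \<beta>_def] r(1) w_int]) auto
  then show "(1 / L) powr (1 / (p - 1)) * a * (norm (x - x0) powr \<alpha> / \<alpha>) \<le> radial_barrier R M a x0 x"
    by (simp add: radial_barrier_def r_def \<beta>(2))
  have "((a powr (p - 1) + M * R ^ DIM('a) / DIM('a)) / \<delta>) powr (1 / (p - 1))
      = (1 / \<delta>) powr (1 / (p - 1)) * (a powr (p - 1) + R ^ DIM('a) * M / DIM('a)) powr (1 / (p - 1))"
    using \<delta>_pos assms(5) r by (simp add: powr_divide mult.commute)
  also have "\<dots> \<le> (1 / \<delta>) powr (1 / (p - 1)) * (a + (R ^ DIM('a) * M / DIM('a)) powr (1 / (p - 1)))"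
    using n p_gt_1 assms(4,5) r by (intro mult_left_mono powr_inverse_add_le) auto
  finally have upper_constant: "((a powr (p - 1) + M * R ^ DIM('a) / DIM('a)) / \<delta>) powr (1 / (p - 1))
      \<le> (1 / \<delta>) powr (1 / (p - 1)) * (a + (R ^ DIM('a) * M / DIM('a)) powr (1 / (p - 1)))" .
  have "integral {0..r} (barrier_slope DIM('a) R M a)
      \<le> ((a powr (p - 1) + M * R ^ DIM('a) / DIM('a)) / \<delta>) powr (1 / (p - 1)) * (r powr (\<beta> + 1) / (\<beta> + 1))"
    using barrier_slope_upper_bound[OF assms(5)] r(2) unfolding \<beta>_def
    by (intro integral_Icc_0_le_powr[OF \<beta>(1)[unfolded \<beta>_def] r(1) w_int]) auto
  also have "\<dots> \<le> (1 / \<delta>) powr (1 / (p - 1)) * (a + (R ^ DIM('a) * M / DIM('a)) powr (1 / (p - 1)))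
      * (r powr (\<beta> + 1) / (\<beta> + 1))"
    using upper_constant \<beta> by (intro mult_right_mono) auto
  finally show "radial_barrier R M a x0 x \<le> (1 / \<delta>) powr (1 / (p - 1)) *
      (a + (R ^ DIM('a) * M / DIM('a)) powr (1 / (p - 1))) * (norm (x - x0) powr \<alpha> / \<alpha>)"
    by (simp add: radial_barrier_def r_def \<beta>(2))
qed

lemma radial_barrier_has_derivative:
  fixes x0 x :: "'a::euclidean_space"
  assumes "real DIM('a) < p" "0 \<le> M" "x \<in> ball x0 R - {x0}"
  shows "(radial_barrier R M a x0 has_derivative (\<lambda>h. barrier_gradient R M a x0 x \<bullet> h)) (at x)"
proof -
  have r: "0 < norm (x - x0)" "norm (x - x0) < R"
    using assms(3) by (auto simp: dist_norm norm_minus_commute)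
  have "((\<lambda>s. integral {0..s} (barrier_slope DIM('a) R M a)) has_real_derivative
      barrier_slope DIM('a) R M a (norm (x - x0))) (at (norm (x - x0)))"
  proof (rule has_real_derivative_integral_Icc_0[OF _ _ r])
    show "continuous_on {0<..<R} (barrier_slope DIM('a) R M a)"
      using continuous_on_barrier_slope[OF assms(2)] by (rule continuous_on_subset) auto
    show "barrier_slope DIM('a) R M a integrable_on {0..s}" if "0 \<le> s" "s < R" for s
      using that assms(1,2) by (intro integrable_barrier_slope) auto
  qed
  from has_derivative_radial[OF this] assms(3) show ?thesis
    by (simp add: radial_barrier_def[abs_def] barrier_gradient_def)
qed

lemma continuous_on_barrier_gradient:
  fixes x0 :: "'a::euclidean_space"
  assumes "0 \<le> M"
  shows "continuous_on (ball x0 R - {x0}) (barrier_gradient R M a x0)"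
proof -
  have "continuous_on (ball x0 R - {x0}) (\<lambda>x. barrier_slope DIM('a) R M a (norm (x - x0)))"
    by (rule continuous_on_compose2[OF continuous_on_barrier_slope[OF assms]])
      (auto simp: dist_norm norm_minus_commute intro!: continuous_intros)
  then show ?thesis
    unfolding barrier_gradient_def by (intro continuous_intros) auto
qed

lemma barrier_flux:
  fixes x0 x :: "'a::euclidean_space" and R M a :: real
  defines "G \<equiv> barrier_gradient R M a x0 x"
  assumes "0 \<le> M" "x \<in> ball x0 R - {x0}"
  shows "(norm G powr (p - 2) * A (norm G)) *\<^sub>R G
    = ((a powr (p - 1) + M * R ^ DIM('a) / DIM('a)) * norm (x - x0) powr (- DIM('a)) - M / DIM('a)) *\<^sub>R (x - x0)"
proof -
  define r where "r = norm (x - x0)"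
  define w where "w = barrier_slope DIM('a) R M a r"
  have r: "0 < r" "r \<le> R"
    using assms(3) by (auto simp: r_def dist_norm norm_minus_commute)
  have w: "0 \<le> w" and phi_w: "phi w = barrier_level DIM('a) R M a r"
    using barrier_slope_nonneg[OF assms(2) _ r(2)] phi_barrier_slope[OF assms(2) _ r(2)] r(1)
    by (auto simp: w_def)
  have G: "G = (w / r) *\<^sub>R (x - x0)" and norm_G: "norm G = w"
    using r w by (simp_all add: G_def barrier_gradient_def w_def r_def)
  have r_n: "r ^ DIM('a) * r powr (- real DIM('a)) = 1"
    using r by (simp add: powr_realpow[symmetric] powr_add[symmetric])
  have "phi w / r = (a powr (p - 1) + M / DIM('a) * (R ^ DIM('a) - r ^ DIM('a))) * (r powr (1 - real DIM('a)) / r)"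
    by (simp add: phi_w barrier_level_def)
  also have "r powr (1 - real DIM('a)) / r = r powr (- real DIM('a))"
    using r by (simp add: powr_diff powr_minus_divide)
  also have "(a powr (p - 1) + M / DIM('a) * (R ^ DIM('a) - r ^ DIM('a))) * r powr (- real DIM('a))
      = (a powr (p - 1) + M * R ^ DIM('a) / DIM('a)) * r powr (- DIM('a))
        - M / DIM('a) * (r ^ DIM('a) * r powr (- real DIM('a)))"
    by (simp add: algebra_simps)
  finally have "phi w / r
      = (a powr (p - 1) + M * R ^ DIM('a) / DIM('a)) * r powr (- DIM('a)) - M / DIM('a)"
    by (simp only: r_n mult_1_right)
  moreover have "(norm G powr (p - 2) * A (norm G)) *\<^sub>R G = (phi w / r) *\<^sub>R (x - x0)"
    unfolding norm_G using phi_altdef[OF w] by (simp add: G mult.assoc)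
  ultimately show ?thesis
    by (simp add: r_def)
qed

lemma radial_barrier_weak_supersolution:
  fixes x0 :: "'a::euclidean_space" and f :: "'a \<Rightarrow> real"
  assumes n: "real DIM('a) < p" and M: "0 \<le> M" and f: "Linf_on (ball x0 R) f"
    and f_le: "AE x in lebesgue. x \<in> ball x0 R \<longrightarrow> f x \<le> M"
  shows "weak_supersolution p A f (ball x0 R - {x0}) (radial_barrier R M a x0)"
proof -
  define n where "n = real DIM('a)"
  define C where "C = a powr (p - 1) + M * R ^ DIM('a) / DIM('a)"
  define \<Phi> where "\<Phi> r = C * r powr (- n) - M / n" for r
  define \<Phi>' where "\<Phi>' r = - n * C * r powr (- n - 1)" for r
  define F' where "F' x h = \<Phi> (norm (x - x0)) *\<^sub>R h
    + (\<Phi>' (norm (x - x0)) / norm (x - x0) * ((x - x0) \<bullet> h)) *\<^sub>R (x - x0)" for x h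
  have \<Phi>_deriv: "(\<Phi> has_real_derivative \<Phi>' r) (at r)" if "0 < r" for r
    unfolding \<Phi>_def \<Phi>'_def using that by (auto intro!: derivative_eq_intros)
  have divergence: "(\<Sum>b\<in>Basis. F' x b \<bullet> b) = - M" if "x \<noteq> x0" for x
    using divergence_radial_power_field[OF that, of C M] by (simp add: F'_def \<Phi>_def \<Phi>'_def n_def)
  show ?thesis
  proof (rule weak_supersolution_if_flux_divergence[where F = "\<lambda>x. \<Phi> (norm (x - x0)) *\<^sub>R (x - x0)" and F' = F'])
    show "open (ball x0 R - {x0})"
      by auto
    show "0 < p"
      using n DIM_positive[where 'a='a] by linarith
    show "(radial_barrier R M a x0 has_derivative (\<lambda>h. barrier_gradient R M a x0 x \<bullet> h)) (at x)"
      if "x \<in> ball x0 R - {x0}" for x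
      by (rule radial_barrier_has_derivative[OF n M that])
    show "continuous_on (ball x0 R - {x0}) (barrier_gradient R M a x0)"
      by (rule continuous_on_barrier_gradient[OF M])
    show "(norm (barrier_gradient R M a x0 x) powr (p - 2) * A (norm (barrier_gradient R M a x0 x)))
        *\<^sub>R barrier_gradient R M a x0 x = \<Phi> (norm (x - x0)) *\<^sub>R (x - x0)"
      if "x \<in> ball x0 R - {x0}" for x
      using barrier_flux[OF M that] by (simp add: \<Phi>_def C_def n_def)
    show "((\<lambda>x. \<Phi> (norm (x - x0)) *\<^sub>R (x - x0)) has_derivative F' x) (at x)"
      if "x \<in> ball x0 R - {x0}" for x
      unfolding F'_def[abs_def] using that
      by (intro has_derivative_radial_field \<Phi>_deriv) auto
    show "continuous_on (ball x0 R - {x0}) (\<lambda>x. F' x b \<bullet> b)" for b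
      unfolding F'_def \<Phi>_def \<Phi>'_def by (intro continuous_intros) auto
    show "Linf_on (ball x0 R - {x0}) f"
      using f by (rule Linf_on_subset) auto
    show "AE x in lebesgue. x \<in> ball x0 R - {x0} \<longrightarrow> f x \<le> - (\<Sum>b\<in>Basis. F' x b \<bullet> b)"
      using f_le by eventually_elim (simp add: divergence)
  qed
qed

end

theorem lemma1:
  fixes p \<delta> L R :: real and A :: "real \<Rightarrow> real"
    and x0 :: "'a::euclidean_space" and f :: "'a \<Rightarrow> real"
  assumes n2: "DIM('a) \<ge> 2"
    and pn: "p > real DIM('a)"
    and A_cont: "continuous_on {0..} A"
    and \<delta>pos: "\<delta> > 0" and Lpos: "L > 0"
    and A_bounds: "\<forall>t\<ge>0. \<delta> \<le> A t \<and> A t \<le> L"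
    and A_mono: "strict_mono_on {0<..} (\<lambda>t. t powr (p - 1) * A t)"
    and Rpos: "R > 0"
    and f_Linf: "Linf_on (ball x0 R) f"
  shows "\<exists>v :: real \<Rightarrow> 'a \<Rightarrow> real. \<forall>a\<ge>0.
     (\<forall>x y. dist x x0 = dist y x0 \<longrightarrow> v a x = v a y) \<and>
     weak_supersolution p A f (ball x0 R - {x0}) (v a) \<and>
     (\<forall>x\<in>ball x0 R.
        let \<alpha> = (p - real DIM('a)) / (p - 1) in
        (1 / L) powr (1 / (p - 1)) * a * (norm (x - x0) powr \<alpha> / \<alpha>) \<le> v a x \<and>
        v a x \<le> (1 / \<delta>) powr (1 / (p - 1)) *
          (a + (R ^ DIM('a) * Linf_norm (ball x0 R) f / real DIM('a)) powr (1 / (p - 1))) *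
          (norm (x - x0) powr \<alpha> / \<alpha>))"
proof -
  interpret structure_function p \<delta> L A
    using n2 pn A_cont \<delta>pos A_bounds A_mono by unfold_locales auto
  have M: "0 \<le> Linf_norm (ball x0 R) f"
    by (rule Linf_norm_nonneg[OF f_Linf])
  have f_le: "AE x in lebesgue. x \<in> ball x0 R \<longrightarrow> f x \<le> Linf_norm (ball x0 R) f"
    using AE_abs_le_Linf_norm[OF f_Linf] by (auto elim!: eventually_mono)
  show ?thesis
    unfolding Let_def
    by (intro exI[of _ "\<lambda>a. radial_barrier R (Linf_norm (ball x0 R) f) a x0"] allI impI conjI ballI
        radial_barrier_dist_eq radial_barrier_weak_supersolution[OF pn M f_Linf f_le]
        radial_barrier_bounds[OF n2 pn _ M])
qed

end
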